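(* Let $A\in\mathbb Z^{d\times n}$ satisfy $\ker(A)\cap\mathbb N^n=\{0\}$ (not necessarily homogeneous). Then the Graver basis $G(A)$ is strongly distance reducing.
   Context: For $z\in\mathbb Z^n$, $z^\pm\in\mathbb N^n$ are the unique vectors with disjoint supports and $z=z^+-z^-$; $\|\cdot\|$ is the $1$-norm. A conformal decomposition of $z\in\ker(A)$ is $z=u+v$ with $u,v\in\ker(A)$, $z^+=u^++v^+$, $z^-=u^-+v^-$; it is proper if $u,v\ne0$. The Graver basis $G(A)$ is the set of nonzero $z\in\ker(A)$ with no proper conformal decomposition. A set $B\subseteq\ker(A)$ is strongly distance reducing if for every nonzero $z\in\ker(A)$ there exist $u\in B$ and $\varepsilon\in\{\pm1\}$ with $z^++\varepsilon u\in\mathbb N^n$ and $\|z^++\varepsilon u-z^-\|<\|z\|$, and there exist $u'\in B$ and $\varepsilon'\in\{\pm1\}$ with $z^-+\varepsilon'u'\in\mathbb N^n$ and $\|z^+-(z^-+\varepsilon'u')\|<\|z\|$. *)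

theory Defs
  imports "HOL-Analysis.Finite_Cartesian_Product"
begin

text \<open>Integer vectors in Z^n are modelled as int ^ 'n (index type 'n finite, n = CARD('n));
  a d x n integer matrix is int ^ 'n ^ 'd.\<close>

definition kerZ :: "int ^ 'n ^ 'd \<Rightarrow> (int ^ 'n) set" where
  "kerZ A = {z. A *v z = 0}"

definition is_nat_vec :: "int ^ 'n \<Rightarrow> bool" where
  "is_nat_vec z \<longleftrightarrow> (\<forall>i. z $ i \<ge> 0)"

definition pos_part :: "int ^ 'n \<Rightarrow> int ^ 'n" where
  "pos_part z = (\<chi> i. max (z $ i) 0)"

definition neg_part :: "int ^ 'n \<Rightarrow> int ^ 'n" where
  "neg_part z = (\<chi> i. max (- (z $ i)) 0)"

definition norm1 :: "int ^ 'n \<Rightarrow> int" where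
  "norm1 z = (\<Sum>i\<in>UNIV. \<bar>z $ i\<bar>)"

definition conformal_decomp :: "int ^ 'n ^ 'd \<Rightarrow> int ^ 'n \<Rightarrow> int ^ 'n \<Rightarrow> int ^ 'n \<Rightarrow> bool" where
  "conformal_decomp A z u v \<longleftrightarrow>
     u \<in> kerZ A \<and> v \<in> kerZ A \<and> z = u + v \<and>
     pos_part z = pos_part u + pos_part v \<and> neg_part z = neg_part u + neg_part v"

definition graver_basis :: "int ^ 'n ^ 'd \<Rightarrow> (int ^ 'n) set" where
  "graver_basis A = {z. z \<in> kerZ A \<and> z \<noteq> 0 \<and>
     \<not> (\<exists>u v. conformal_decomp A z u v \<and> u \<noteq> 0 \<and> v \<noteq> 0)}"

definition strongly_distance_reducing :: "int ^ 'n ^ 'd \<Rightarrow> (int ^ 'n) set \<Rightarrow> bool" where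
  "strongly_distance_reducing A B \<longleftrightarrow> B \<subseteq> kerZ A \<and>
     (\<forall>z \<in> kerZ A. z \<noteq> 0 \<longrightarrow>
        (\<exists>u \<in> B. \<exists>\<epsilon> \<in> {1, -1::int}.
            is_nat_vec (pos_part z + \<epsilon> *s u) \<and>
            norm1 (pos_part z + \<epsilon> *s u - neg_part z) < norm1 z) \<and>
        (\<exists>u' \<in> B. \<exists>\<epsilon>' \<in> {1, -1::int}.
            is_nat_vec (neg_part z + \<epsilon>' *s u') \<and>
            norm1 (pos_part z - (neg_part z + \<epsilon>' *s u')) < norm1 z))"

end

theory Submission
  imports Defs
begin

text \<open>Every nonzero z in the kernel dominates some Graver element g in the conformal order
  (g lies componentwise between 0 and z): split z conformally until no proper decomposition
  remains, which terminates because the 1-norm is additive on conformal decompositions.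
  For such g both z^+ - g and z^- + g are nonnegative, and both moves replace z by z - g,
  whose 1-norm is the norm of z minus that of g.\<close>

definition conformal_le :: "int ^ 'n \<Rightarrow> int ^ 'n \<Rightarrow> bool" where
  "conformal_le g z \<longleftrightarrow> (\<forall>i. (0 \<le> g $ i \<and> g $ i \<le> z $ i) \<or> (z $ i \<le> g $ i \<and> g $ i \<le> 0))"

lemma conformal_le_refl: "conformal_le z z"
  unfolding conformal_le_def by auto

lemma conformal_le_trans: "conformal_le g u \<Longrightarrow> conformal_le u z \<Longrightarrow> conformal_le g z"
  unfolding conformal_le_def by (metis order_trans)

lemma norm1_pos:
  assumes "v \<noteq> 0"
  shows "0 < norm1 v"
proof -
  obtain i where i: "v $ i \<noteq> 0"
    using assms by (auto simp: vec_eq_iff)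
  have "\<bar>v $ i\<bar> \<le> (\<Sum>j\<in>UNIV. \<bar>v $ j\<bar>)"
    by (rule member_le_sum) auto
  with i show ?thesis
    unfolding norm1_def by simp
qed

lemma norm1_diff_conformal_le:
  assumes "conformal_le g z"
  shows "norm1 (z - g) + norm1 g = norm1 z"
proof -
  have "\<bar>(z - g) $ i\<bar> + \<bar>g $ i\<bar> = \<bar>z $ i\<bar>" for i
    using assms[unfolded conformal_le_def, rule_format, of i] by auto
  then show ?thesis
    unfolding norm1_def by (simp add: sum.distrib[symmetric])
qed

lemma pos_part_minus_neg_part: "pos_part z - neg_part z = z"
  unfolding pos_part_def neg_part_def vec_eq_iff by auto

lemma conformal_decomp_conformal_le:
  assumes "conformal_decomp A z u v"
  shows "conformal_le u z"
proof -
  have "z = u + v" "pos_part z = pos_part u + pos_part v"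
    using assms unfolding conformal_decomp_def by auto
  then have sums: "z $ i = u $ i + v $ i" "max (z $ i) 0 = max (u $ i) 0 + max (v $ i) 0" for i
    unfolding pos_part_def vec_eq_iff by auto
  have "(0 \<le> u $ i \<and> u $ i \<le> z $ i) \<or> (z $ i \<le> u $ i \<and> u $ i \<le> 0)" for i
    using sums[of i] by linarith
  then show ?thesis
    unfolding conformal_le_def by blast
qed

lemma norm1_conformal_decomp:
  assumes "conformal_decomp A z u v"
  shows "norm1 z = norm1 u + norm1 v"
proof -
  have "v = z - u"
    using assms unfolding conformal_decomp_def by simp
  then show ?thesis
    using norm1_diff_conformal_le[OF conformal_decomp_conformal_le[OF assms]] by simp
qed

lemma graver_basis_conformal_le_ex:
  assumes "z \<in> kerZ A" "z \<noteq> 0"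
  shows "\<exists>g\<in>graver_basis A. conformal_le g z"
  using assms
proof (induction "nat (norm1 z)" arbitrary: z rule: less_induct)
  case less
  show ?case
  proof (cases "z \<in> graver_basis A")
    case True
    then show ?thesis
      using conformal_le_refl by blast
  next
    case False
    then obtain u v where uv: "conformal_decomp A z u v" "u \<noteq> 0" "v \<noteq> 0"
      using less.prems unfolding graver_basis_def by auto
    have "nat (norm1 u) < nat (norm1 z)"
      using norm1_conformal_decomp[OF uv(1)] norm1_pos[OF uv(2)] norm1_pos[OF uv(3)] by simp
    moreover have "u \<in> kerZ A"
      using uv(1) unfolding conformal_decomp_def by simp
    ultimately obtain g where "g \<in> graver_basis A" "conformal_le g u"
      using less.hyps uv(2) by blast
    then show ?thesis
      using conformal_le_trans conformal_decomp_conformal_le[OF uv(1)] by blast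
  qed
qed

lemma is_nat_vec_pos_part_diff:
  "conformal_le g z \<Longrightarrow> is_nat_vec (pos_part z - g)"
  unfolding conformal_le_def is_nat_vec_def pos_part_def by (auto simp: max_def) (metis order_trans)

lemma is_nat_vec_neg_part_add:
  "conformal_le g z \<Longrightarrow> is_nat_vec (neg_part z + g)"
  unfolding conformal_le_def is_nat_vec_def neg_part_def by (auto simp: max_def) (metis order_trans)

theorem proposition7p2:
  fixes A :: "int ^ 'n ^ 'd"
  assumes "\<forall>z \<in> kerZ A. is_nat_vec z \<longrightarrow> z = 0"
  shows "strongly_distance_reducing A (graver_basis A)"
  unfolding strongly_distance_reducing_def
proof (intro conjI ballI impI)
  show "graver_basis A \<subseteq> kerZ A"
    unfolding graver_basis_def by auto
next
  fix z assume "z \<in> kerZ A" "z \<noteq> 0"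
  then obtain g where g: "g \<in> graver_basis A" "conformal_le g z"
    using graver_basis_conformal_le_ex by blast
  have "g \<noteq> 0"
    using g(1) unfolding graver_basis_def by simp
  then have shorter: "norm1 (z - g) < norm1 z"
    using norm1_diff_conformal_le[OF g(2)] norm1_pos by fastforce
  have "pos_part z + (-1) *s g - neg_part z = z - g" "pos_part z - (neg_part z + 1 *s g) = z - g"
    using pos_part_minus_neg_part[of z] by (simp_all add: vec_eq_iff algebra_simps)
  moreover have "pos_part z + (-1) *s g = pos_part z - g" "neg_part z + 1 *s g = neg_part z + g"
    by (simp_all add: vec_eq_iff)
  ultimately show "\<exists>u\<in>graver_basis A. \<exists>\<epsilon>\<in>{1, -1::int}. is_nat_vec (pos_part z + \<epsilon> *s u) \<and>
      norm1 (pos_part z + \<epsilon> *s u - neg_part z) < norm1 z"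
    and "\<exists>u\<in>graver_basis A. \<exists>\<epsilon>\<in>{1, -1::int}. is_nat_vec (neg_part z + \<epsilon> *s u) \<and>
      norm1 (pos_part z - (neg_part z + \<epsilon> *s u)) < norm1 z"
    using g shorter is_nat_vec_pos_part_diff is_nat_vec_neg_part_add by (metis insertCI)+
qed

end
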